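(* For all $n\geq 1$, \[a_{2(2)}(n)=b_2(n)+b_2(n+1)-b_2(n+2).\]
   Context: For $\ell\ge 2$, an $\ell$-regular partition is a partition with no part divisible by $\ell$, and $b_\ell(n)$ is the number of $\ell$-regular partitions of $n$. $a_{m(\ell)}(n)$ is the number of $\ell$-regular partitions of $n$ in which the smallest part occurs at least $m$ times; here $\ell=2$, $m=2$. *)

theory Defs
  imports Main "HOL-Library.Multiset"
begin

definition partitions :: "nat \<Rightarrow> nat multiset set" where
  "partitions n = {P. (\<forall>x\<in>#P. 0 < x) \<and> sum_mset P = n}"

definition regular_partitions :: "nat \<Rightarrow> nat \<Rightarrow> nat multiset set" where
  "regular_partitions l n = {P \<in> partitions n. \<forall>x\<in>#P. \<not> l dvd x}"

definition b :: "nat \<Rightarrow> nat \<Rightarrow> nat" where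
  "b l n = card (regular_partitions l n)"

definition a :: "nat \<Rightarrow> nat \<Rightarrow> nat \<Rightarrow> nat" where
  "a m l n = card {P \<in> regular_partitions l n. P \<noteq> {#} \<and> count P (Min_mset P) \<ge> m}"

end

theory Submission
  imports Defs
begin

text \<open>Split the 2-regular (i.e. odd) partitions of \<open>n\<close> by the multiplicity of the smallest
  part. Raising the smallest part by 2 maps those whose smallest part occurs only once
  bijectively onto the odd partitions of \<open>n + 2\<close> without a part 1. Removing one part 1 maps
  the odd partitions of \<open>n + 2\<close> that do contain 1 bijectively onto the odd partitions of
  \<open>n + 1\<close>, so \<open>b(n) = a(n) + (b(n + 2) - b(n + 1))\<close>.\<close>

lemma size_le_sum_mset_if_pos:
  fixes P :: "nat multiset"
  assumes "\<forall>x\<in>#P. 0 < x"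
  shows "size P \<le> sum_mset P"
  using assms by (induction P) auto

lemma finite_partitions: "finite (partitions n)"
proof (rule finite_subset)
  show "partitions n \<subseteq> (\<Union>k\<le>n. multisets_of_size {1..n} k)"
  proof
    fix P assume "P \<in> partitions n"
    then have pos: "\<forall>x\<in>#P. 0 < x" and sum: "sum_mset P = n"
      by (auto simp: partitions_def)
    have "size P \<le> n"
      using size_le_sum_mset_if_pos[OF pos] sum by simp
    moreover have "set_mset P \<subseteq> {1..n}"
      using pos sum by (auto dest!: multi_member_split)
    ultimately show "P \<in> (\<Union>k\<le>n. multisets_of_size {1..n} k)"
      by (auto simp: multisets_of_size_def)
  qed
qed auto

lemma finite_regular_partitions: "finite (regular_partitions l n)"
  using finite_partitions[of n] unfolding regular_partitions_def by auto

lemma regular_partitions_2_iff: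
  "P \<in> regular_partitions 2 n \<longleftrightarrow> (\<forall>x\<in>#P. odd x) \<and> sum_mset P = n"
  unfolding regular_partitions_def partitions_def by (auto intro: odd_pos)

lemma card_eq_card_filter_add_card_filter_not:
  assumes "finite A"
  shows "card A = card {x \<in> A. P x} + card {x \<in> A. \<not> P x}"
  using assms by (subst card_Un_disjoint[symmetric]) (auto intro: arg_cong[where f = card])

lemma b_Suc_eq_b_plus_card_without_one:
  assumes "l \<noteq> 1"
  shows "b l (Suc m) = b l m + card {P \<in> regular_partitions l (Suc m). 1 \<notin># P}"
proof -
  let ?R = "regular_partitions l"
  have with_one: "{P \<in> ?R (Suc m). 1 \<in># P} = add_mset 1 ` ?R m"
  proof (intro equalityI subsetI)
    fix P assume "P \<in> {P \<in> ?R (Suc m). 1 \<in># P}"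
    then obtain Q where "P = add_mset 1 Q" "P \<in> ?R (Suc m)"
      by (auto dest: multi_member_split)
    then show "P \<in> add_mset 1 ` ?R m"
      by (auto simp: regular_partitions_def partitions_def)
  qed (use assms in \<open>auto simp: regular_partitions_def partitions_def\<close>)
  have "b l (Suc m) = card {P \<in> ?R (Suc m). 1 \<in># P} + card {P \<in> ?R (Suc m). 1 \<notin># P}"
    unfolding b_def by (rule card_eq_card_filter_add_card_filter_not[OF finite_regular_partitions])
  also have "card {P \<in> ?R (Suc m). 1 \<in># P} = b l m"
    unfolding with_one b_def by (rule card_image) (simp add: inj_on_def)
  finally show ?thesis .
qed

text \<open>No \<open>P \<noteq> {#}\<close> is needed beside \<open>count P (Min_mset P) = 1\<close>: whatever the unspecified
  value \<open>Min_mset {#}\<close> is, its count in \<open>{#}\<close> is 0.\<close>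

lemma b_eq_a2_plus_card_simple_min:
  assumes "n \<ge> 1"
  shows "b l n = a 2 l n + card {P \<in> regular_partitions l n. count P (Min_mset P) = 1}"
proof -
  let ?R = "regular_partitions l n"
  have nonempty: "P \<noteq> {#} \<and> count P (Min_mset P) \<noteq> 0" if "P \<in> ?R" for P
  proof -
    from that assms have "P \<noteq> {#}"
      by (auto simp: regular_partitions_def partitions_def)
    then show ?thesis
      by simp
  qed
  have "{P \<in> ?R. count P (Min_mset P) \<noteq> 1}
      = {P \<in> ?R. P \<noteq> {#} \<and> count P (Min_mset P) \<ge> 2}"
  proof (rule Collect_cong)
    fix P
    have "count P (Min_mset P) \<noteq> 1 \<longleftrightarrow> count P (Min_mset P) \<ge> 2" if "P \<in> ?R"
      using nonempty[OF that] by linarith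
    then show "P \<in> ?R \<and> count P (Min_mset P) \<noteq> 1
        \<longleftrightarrow> P \<in> ?R \<and> P \<noteq> {#} \<and> count P (Min_mset P) \<ge> 2"
      using nonempty by blast
  qed
  then show ?thesis
    using card_eq_card_filter_add_card_filter_not[OF finite_regular_partitions,
        of l n "\<lambda>P. count P (Min_mset P) = 1"]
    unfolding a_def b_def by simp
qed

definition raise_min :: "nat multiset \<Rightarrow> nat multiset" where
  "raise_min P = add_mset (Min_mset P + 2) (P - {#Min_mset P#})"

definition lower_min :: "nat multiset \<Rightarrow> nat multiset" where
  "lower_min P = add_mset (Min_mset P - 2) (P - {#Min_mset P#})"

lemma Min_mset_add_mset_lower_bound:
  fixes m :: "'a :: linorder"
  assumes "\<forall>x\<in>#R. m \<le> x"
  shows "Min_mset (add_mset m R) = m"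
  using assms by (intro Min_eqI) auto

lemma raise_min_simple_min:
  assumes "P \<in> regular_partitions 2 n" and simple: "count P (Min_mset P) = 1"
  shows "raise_min P \<in> regular_partitions 2 (n + 2)" and "1 \<notin># raise_min P"
    and "lower_min (raise_min P) = P"
proof -
  from assms have odd: "\<forall>x\<in>#P. odd x" and sum: "sum_mset P = n"
    by (auto simp: regular_partitions_2_iff)
  define m where "m = Min_mset P"
  have min_le: "m \<le> x" if "x \<in># P" for x
    using that unfolding m_def by simp
  from simple have count_m: "count P m = 1"
    unfolding m_def .
  then have "m \<in># P"
    by (metis count_eq_zero_iff zero_neq_one)
  then obtain R where P: "P = add_mset m R"
    by (metis multi_member_split)
  from count_m have "m \<notin># R"
    unfolding P by (simp add: not_in_iff)
  have R_gt: "m + 2 \<le> x" if "x \<in># R" for x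
  proof -
    have "m \<le> x" "x \<noteq> m" "odd x" "odd m"
      using that \<open>m \<notin># R\<close> odd min_le unfolding P by auto
    then show ?thesis
      by presburger
  qed
  have raise: "raise_min P = add_mset (m + 2) R"
    unfolding raise_min_def m_def[symmetric] by (simp add: P)
  have min_raise: "Min_mset (raise_min P) = m + 2"
    unfolding raise using R_gt by (intro Min_mset_add_mset_lower_bound) auto
  show "lower_min (raise_min P) = P"
    unfolding lower_min_def min_raise unfolding raise by (simp add: P)
  show "raise_min P \<in> regular_partitions 2 (n + 2)"
    using odd sum unfolding raise unfolding P by (simp add: regular_partitions_2_iff)
  show "1 \<notin># raise_min P"
    using R_gt unfolding raise by force
qed

lemma lower_min_without_one:
  assumes "Q \<in> regular_partitions 2 (n + 2)" and no_one: "1 \<notin># Q"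
  shows "lower_min Q \<in> regular_partitions 2 n"
    and "count (lower_min Q) (Min_mset (lower_min Q)) = 1"
    and "raise_min (lower_min Q) = Q"
proof -
  from assms have odd: "\<forall>x\<in>#Q. odd x" and sum: "sum_mset Q = n + 2"
    by (auto simp: regular_partitions_2_iff)
  define m where "m = Min_mset Q"
  have min_le: "m \<le> x" if "x \<in># Q" for x
    using that unfolding m_def by simp
  from sum have "Q \<noteq> {#}"
    by auto
  then have "m \<in># Q"
    unfolding m_def by simp
  then obtain R where Q: "Q = add_mset m R"
    by (metis multi_member_split)
  have "odd m" "m \<noteq> 1"
    using odd no_one \<open>m \<in># Q\<close> by auto
  then have "m \<ge> 3"
    by presburger
  have R_ge: "m \<le> x" "odd x" if "x \<in># R" for x
    using that odd min_le unfolding Q by auto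
  have lower: "lower_min Q = add_mset (m - 2) R"
    unfolding lower_min_def m_def[symmetric] by (simp add: Q)
  have min_lower: "Min_mset (lower_min Q) = m - 2"
    unfolding lower using R_ge by (intro Min_mset_add_mset_lower_bound) force
  show "raise_min (lower_min Q) = Q"
    unfolding raise_min_def min_lower unfolding lower using \<open>m \<ge> 3\<close> by (simp add: Q)
  have "m - 2 \<notin># R"
    using R_ge \<open>m \<ge> 3\<close> by force
  then show "count (lower_min Q) (Min_mset (lower_min Q)) = 1"
    unfolding min_lower unfolding lower by (simp add: not_in_iff)
  have "odd (m - 2)"
    using \<open>odd m\<close> \<open>m \<ge> 3\<close> by presburger
  then show "lower_min Q \<in> regular_partitions 2 n"
    using R_ge sum \<open>m \<ge> 3\<close> unfolding lower unfolding Q by (auto simp: regular_partitions_2_iff)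
qed

lemma bij_betw_raise_min:
  "bij_betw raise_min {P \<in> regular_partitions 2 n. count P (Min_mset P) = 1}
     {Q \<in> regular_partitions 2 (n + 2). 1 \<notin># Q}"
  by (rule bij_betw_byWitness[where f' = lower_min])
     (blast dest: raise_min_simple_min lower_min_without_one)+

theorem theorem5p4:
  fixes n :: nat
  assumes "n \<ge> 1"
  shows "int (a 2 2 n) = int (b 2 n) + int (b 2 (n + 1)) - int (b 2 (n + 2))"
proof -
  let ?simple_min = "{P \<in> regular_partitions 2 n. count P (Min_mset P) = 1}"
  let ?without_one = "{Q \<in> regular_partitions 2 (n + 2). 1 \<notin># Q}"
  have "b 2 n = a 2 2 n + card ?simple_min"
    by (rule b_eq_a2_plus_card_simple_min[OF assms])
  moreover have "card ?simple_min = card ?without_one"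
    by (rule bij_betw_same_card[OF bij_betw_raise_min])
  moreover have "b 2 (n + 2) = b 2 (n + 1) + card ?without_one"
    using b_Suc_eq_b_plus_card_without_one[of 2 "n + 1"] by simp
  ultimately show ?thesis
    by linarith
qed

end
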